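(* For every integer $w\geq 3$, $$\sum_{i=1}^{w-2}\sigma(w-i,i)=(w-1)\,\lambda(w).$$
   Context: For integers $t\geq 1$ and $n\geq 1$ let $S_n^{(t)}=\sum_{k=1}^{n}\frac{1}{(2k-1)^t}$, and for integers $s\geq 2$, $t\geq 1$ let $\sigma(s,t)=\sum_{n\geq 1}\frac{S_n^{(t)}}{n^s}$. For real $s>1$, $\lambda(s)=\sum_{n\geq 1}\frac{1}{(2n-1)^s}=(1-2^{-s})\zeta(s)$. *)

theory Defs
  imports "HOL-Analysis.Analysis"
begin

definition S_odd :: "nat \<Rightarrow> nat \<Rightarrow> real" where
  "S_odd t n = (\<Sum>k=1..n. 1 / (2 * real k - 1) ^ t)"

definition sigma_sum :: "nat \<Rightarrow> nat \<Rightarrow> real" where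
  "sigma_sum s t = (\<Sum>n. S_odd t (Suc n) / real (Suc n) ^ s)"

definition lambda_odd :: "nat \<Rightarrow> real" where
  "lambda_odd s = (\<Sum>n. 1 / (2 * real (Suc n) - 1) ^ s)"

end

theory Submission
  imports Defs
begin

(*
  Both sides are sums of the kernel mixed_sum w n j = \<Sum>i=1..w-2. 1/(n^(w-i) j^i) over the
  pairs with j odd and j < 2n. Off the diagonal the geometric sum gives
    mixed_sum w n j = 1/(j^(w-2) n (n-j)) - 1/(n^(w-1) (n-j)).
  On the region j < n the first term is summed along columns (\<Sum>n>j. 1/(n(n-j)) = H_j/j), the
  second along rows; on n < j < 2n likewise, the columns now giving H_(j-1)/j, and the
  reflection j \<mapsto> 2n - j shows that the row sums are the same as on j < n. So the row sums
  cancel, the column sums leave \<Sum>j odd. (H_j - H_(j-1))/j^(w-1) = \<lambda>(w), and the diagonal adds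
  (w-2) \<lambda>(w). All terms are nonnegative, which justifies every rearrangement; convergence of
  the column and row sums follows from H_j \<le> 2 sqrt j.
*)

lemma has_sum_diff:
  fixes f g :: "'a \<Rightarrow> 'b::topological_ab_group_add"
  assumes "(f has_sum a) A" "(g has_sum b) A"
  shows "((\<lambda>x. f x - g x) has_sum (a - b)) A"
  using has_sum_add[OF assms(1), of "\<lambda>x. - g x" "- b"] assms(2) by (simp add: has_sum_uminus)

lemma has_sum_sum:
  fixes f :: "'i \<Rightarrow> 'a \<Rightarrow> 'b::topological_comm_monoid_add"
  assumes "finite I" "\<And>i. i \<in> I \<Longrightarrow> (f i has_sum s i) A"
  shows "((\<lambda>x. \<Sum>i\<in>I. f i x) has_sum (\<Sum>i\<in>I. s i)) A"
  using assms by (induction I rule: finite_induct) (auto intro: has_sum_add)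

lemma has_sum_by_rows:
  fixes f :: "'a \<times> 'b \<Rightarrow> real"
  assumes "\<And>p. p \<in> X \<Longrightarrow> f p \<ge> 0"
    and "\<And>x. ((\<lambda>y. f (x, y)) has_sum g x) {y. (x, y) \<in> X}"
    and "(g has_sum S) UNIV"
  shows "(f has_sum S) X"
proof -
  have X: "X = Sigma UNIV (\<lambda>x. {y. (x, y) \<in> X})" by auto
  have "f summable_on Sigma UNIV (\<lambda>x. {y. (x, y) \<in> X})"
    using assms X by (intro summable_on_SigmaI[where g = g]) (auto simp: summable_on_def)
  with assms have "(f has_sum S) (Sigma UNIV (\<lambda>x. {y. (x, y) \<in> X}))"
    by (intro has_sum_SigmaI[where g = g])
  with X show ?thesis by simp
qed

lemma has_sum_by_cols:
  fixes f :: "'a \<times> 'b \<Rightarrow> real"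
  assumes "\<And>p. p \<in> X \<Longrightarrow> f p \<ge> 0"
    and cols: "\<And>y. ((\<lambda>x. f (x, y)) has_sum g y) {x. (x, y) \<in> X}"
    and "(g has_sum S) UNIV"
  shows "(f has_sum S) X"
proof -
  have "((f \<circ> prod.swap) has_sum S) (prod.swap ` X)"
  proof (rule has_sum_by_rows[where g = g])
    fix y
    have "{x. (y, x) \<in> prod.swap ` X} = {x. (x, y) \<in> X}" by force
    with cols[of y] show "((\<lambda>x. (f \<circ> prod.swap) (y, x)) has_sum g y) {x. (y, x) \<in> prod.swap ` X}"
      by simp
  qed (use assms in auto)
  then show ?thesis by (simp add: has_sum_reindex comp_def)
qed

lemma has_sum_rowsD:
  fixes f :: "'a \<times> 'b \<Rightarrow> real"
  assumes "(f has_sum S) X"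
    and "\<And>x. ((\<lambda>y. f (x, y)) has_sum g x) {y. (x, y) \<in> X}"
  shows "(g has_sum S) UNIV"
proof -
  have "X = Sigma UNIV (\<lambda>x. {y. (x, y) \<in> X})" by auto
  with assms show ?thesis by (intro has_sum_SigmaD[where B = "\<lambda>x. {y. (x, y) \<in> X}" and f = f]) auto
qed

lemma harm_le_two_sqrt: "(harm n :: real) \<le> 2 * sqrt (real n)"
proof (induction n)
  case 0
  then show ?case by (simp add: harm_def)
next
  case (Suc n)
  define a b where "a = sqrt (real (Suc n))" and "b = sqrt (real n)"
  have "1 \<le> a" "b \<le> a" "0 \<le> b" by (simp_all add: a_def b_def)
  have "1 = (a - b) * (a + b)" by (simp add: a_def b_def algebra_simps)
  also have "\<dots> \<le> (a - b) * (2 * a)"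
    using \<open>b \<le> a\<close> by (intro mult_left_mono) auto
  finally have "1 / a \<le> 2 * (a - b)"
    using \<open>1 \<le> a\<close> by (simp add: field_simps)
  moreover have "1 / real (Suc n) \<le> 1 / a"
    using \<open>1 \<le> a\<close> by (intro divide_left_mono) (auto simp: a_def real_sqrt_le_iff' power2_eq_square)
  ultimately have "1 / real (Suc n) \<le> 2 * a - 2 * b" by simp
  with Suc show ?case by (simp add: harm_Suc inverse_eq_divide a_def b_def)
qed

lemma summable_on_harm_div_power:
  assumes "2 \<le> k"
  shows "(\<lambda>j. harm j / real j ^ k :: real) summable_on UNIV"
proof (rule summable_on_comparison_test)
  have "summable (\<lambda>j. 2 * real j powr (-3/2))"
    by (intro summable_mult) (simp add: summable_real_powr_iff)
  then show "(\<lambda>j. 2 * real j powr (-3/2)) summable_on UNIV"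
    by (subst summable_on_UNIV_nonneg_real_iff) auto
  show "0 \<le> harm j / real j ^ k" for j
    by (simp add: harm_nonneg)
  show "harm j / real j ^ k \<le> 2 * real j powr (-3/2)" for j
  proof (cases "j = 0")
    case False
    then have "1 \<le> real j" by simp
    have "harm j / real j ^ k \<le> harm j / real j ^ 2"
      using \<open>1 \<le> real j\<close> assms by (intro divide_left_mono harm_nonneg power_increasing) auto
    also have "\<dots> \<le> 2 * sqrt (real j) / real j ^ 2"
      using harm_le_two_sqrt by (intro divide_right_mono) auto
    also have "\<dots> = 2 * (real j powr (1/2) / real j powr 2)"
      using False by (simp add: powr_half_sqrt powr_realpow)
    also have "\<dots> = 2 * real j powr (-3/2)"
      by (subst powr_diff[symmetric]) simp_all
    finally show ?thesis .
  qed (simp add: harm_def)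
qed

lemma sum_inverse_powers_eq:
  fixes x y :: "'a::field"
  assumes "x \<noteq> 0" "y \<noteq> 0" "x \<noteq> y"
  shows "(\<Sum>i=1..m. 1 / (x ^ (m + 2 - i) * y ^ i)) = 1 / (y ^ m * x * (x - y)) - 1 / (x ^ (m + 1) * (x - y))"
proof (induction m)
  case 0
  then show ?case using assms by (simp add: field_simps)
next
  case (Suc m)
  have "(\<Sum>i=1..Suc m. 1 / (x ^ (Suc m + 2 - i) * y ^ i))
      = (\<Sum>i=1..m. 1 / (x ^ (m + 2 - i) * y ^ i)) / x + 1 / (x\<^sup>2 * y ^ Suc m)"
  proof -
    have "(\<Sum>i=1..m. 1 / (x ^ (Suc m + 2 - i) * y ^ i)) = (\<Sum>i=1..m. 1 / (x ^ (m + 2 - i) * y ^ i)) / x"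
      unfolding sum_divide_distrib by (intro sum.cong refl) (auto simp: Suc_diff_le)
    then show ?thesis by (simp add: sum.cl_ivl_Suc)
  qed
  also have "\<dots> = 1 / (y ^ Suc m * x * (x - y)) - 1 / (x ^ (Suc m + 1) * (x - y))"
    unfolding Suc.IH using assms
    by (simp add: divide_simps) (simp add: algebra_simps power2_eq_square)
  finally show ?case .
qed

lemma has_sum_inverse_mult_diff_tail:
  assumes "1 \<le> j"
  shows "((\<lambda>n. 1 / (real n * (real n - real j))) has_sum harm j / real j) {n. j < n}"
proof -
  define f where "f m = (\<Sum>r<j. 1 / real (m + 1 + r))" for m
  have "(\<lambda>m. 1 / real (m + 1 + r)) \<longlonglongrightarrow> 0" for r
    using LIMSEQ_ignore_initial_segment[OF LIMSEQ_inverse_real_of_nat, of r]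
    by (simp add: inverse_eq_divide add_ac)
  then have "f \<longlonglongrightarrow> 0"
    unfolding f_def by (intro tendsto_null_sum)
  moreover have "f m - f (Suc m) = 1 / real (m + 1) - 1 / real (m + 1 + j)" for m
    using sum_lessThan_telescope'[of "\<lambda>r. 1 / real (m + 1 + r)" j] by (simp add: f_def sum_subtractf add_ac)
  moreover have "f 0 = harm j"
    by (simp add: f_def harm_altdef inverse_eq_divide add_ac)
  ultimately have "(\<lambda>m. 1 / real (m + 1) - 1 / real (m + 1 + j)) sums harm j"
    using telescope_sums'[of f 0] by simp
  then have "(\<lambda>m. (1 / real (m + 1) - 1 / real (m + 1 + j)) / real j) sums (harm j / real j)"
    by (rule sums_divide)
  moreover have "(1 / real (m + 1) - 1 / real (m + 1 + j)) / real j
      = 1 / (real (m + 1 + j) * (real (m + 1 + j) - real j))" for m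
  proof -
    have "(1 / x - 1 / (x + y)) / y = 1 / ((x + y) * (x + y - y))" if "x > 0" "y > 0" for x y :: real
      using that by (simp add: divide_simps)
    from this[of "real (m + 1)" "real j"] assms show ?thesis by (simp add: add_ac)
  qed
  ultimately have "((\<lambda>m. 1 / (real (m + 1 + j) * (real (m + 1 + j) - real j))) has_sum harm j / real j) UNIV"
    by (intro sums_nonneg_imp_has_sum) simp_all
  then show ?thesis
    by (rule has_sum_reindex_bij_witness[of _ "\<lambda>n. n - j - 1" "\<lambda>m. m + 1 + j", THEN iffD1, rotated -1])
       auto
qed

lemma sum_inverse_mult_diff_middle:
  assumes "odd j"
  shows "(\<Sum>n | n < j \<and> j < 2 * n. 1 / (real n * (real j - real n))) = harm (j - 1) / real j"
proof -
  let ?A = "{n. n < j \<and> j < 2 * n}" and ?B = "{d. 0 < d \<and> 2 * d < j}"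
  have "finite ?A" "finite ?B" by (auto intro: finite_subset[of _ "{..<j}"])
  have "(\<Sum>n\<in>?A. 1 / (real n * (real j - real n))) = (\<Sum>n\<in>?A. (1 / real n + 1 / (real j - real n)) / real j)"
    by (intro sum.cong refl) (auto simp: field_simps)
  also have "\<dots> = ((\<Sum>n\<in>?A. 1 / real n) + (\<Sum>n\<in>?A. 1 / (real j - real n))) / real j"
    by (simp add: sum_divide_distrib sum.distrib add_divide_distrib)
  also have "(\<Sum>n\<in>?A. 1 / (real j - real n)) = (\<Sum>d\<in>?B. 1 / real d)"
    by (rule sum.reindex_bij_witness[of _ "\<lambda>d. j - d" "\<lambda>n. j - n"]) (auto simp: of_nat_diff)
  also have "(\<Sum>n\<in>?A. 1 / real n) + (\<Sum>d\<in>?B. 1 / real d) = (\<Sum>n\<in>?A \<union> ?B. 1 / real n)"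
    using \<open>finite ?A\<close> \<open>finite ?B\<close> by (intro sum.union_disjoint[symmetric]) auto
  also have "?A \<union> ?B = {1..j - 1}"
    using assms by (auto elim!: oddE; presburger)
  also have "(\<Sum>n\<in>{1..j - 1}. 1 / real n) = harm (j - 1)"
    by (simp add: harm_def inverse_eq_divide)
  finally show ?thesis .
qed

lemma sum_odd_inverse_diff_reflect:
  "(\<Sum>j | odd j \<and> j < n. 1 / (real n - real j)) = (\<Sum>j | odd j \<and> n < j \<and> j < 2 * n. 1 / (real j - real n))"
  by (rule sum.reindex_bij_witness[of _ "\<lambda>j. 2 * n - j" "\<lambda>j. 2 * n - j"]) (auto simp: of_nat_diff odd_pos)

lemma sum_odd_inverse_diff_le_harm: "(\<Sum>j | odd j \<and> j < n. 1 / (real n - real j)) \<le> harm n"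
proof -
  have "(\<Sum>j | odd j \<and> j < n. 1 / (real n - real j)) \<le> (\<Sum>j<n. 1 / (real n - real j))"
    by (intro sum_mono2) auto
  also have "\<dots> = (\<Sum>d=1..n. 1 / real d)"
    by (rule sum.reindex_bij_witness[of _ "\<lambda>d. n - d" "\<lambda>j. n - j"]) (auto simp: of_nat_diff)
  also have "\<dots> = harm n"
    by (simp add: harm_def inverse_eq_divide)
  finally show ?thesis .
qed

lemma S_odd_eq_sum_odd: "S_odd t n = (\<Sum>j | odd j \<and> j < 2 * n. 1 / real j ^ t)"
  unfolding S_odd_def
  by (rule sum.reindex_bij_witness[of _ "\<lambda>j. (j + 1) div 2" "\<lambda>k. 2 * k - 1"])
     (auto elim!: oddE simp: of_nat_diff)

lemma has_sum_lambda_odd: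
  assumes "2 \<le> w"
  shows "((\<lambda>j. 1 / real j ^ w) has_sum lambda_odd w) {j. odd j}"
proof -
  have "summable (\<lambda>n. 1 / (2 * real (Suc n) - 1) ^ w)"
  proof (rule summable_comparison_test')
    show "summable (\<lambda>n. inverse (real (Suc n) ^ 2))"
      using inverse_power_summable[of 2] summable_Suc_iff[of "\<lambda>n. inverse (real n ^ 2)"] by simp
    have "real (Suc n) ^ 2 \<le> (2 * real (Suc n) - 1) ^ w" for n
    proof -
      have "real (Suc n) ^ 2 \<le> (2 * real (Suc n) - 1) ^ 2" by (intro power_mono) auto
      also have "\<dots> \<le> (2 * real (Suc n) - 1) ^ w" using assms by (intro power_increasing) auto
      finally show ?thesis .
    qed
    then show "norm (1 / (2 * real (Suc n) - 1) ^ w) \<le> inverse (real (Suc n) ^ 2)" for n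
      by (simp add: field_simps)
  qed
  then have "((\<lambda>n. 1 / (2 * real (Suc n) - 1) ^ w) has_sum lambda_odd w) UNIV"
    unfolding lambda_odd_def by (intro sums_nonneg_imp_has_sum summable_sums) auto
  then show ?thesis
    by (rule has_sum_reindex_bij_witness[of UNIV "\<lambda>j. (j - 1) div 2" "\<lambda>n. 2 * n + 1", THEN iffD1, rotated -1])
       (auto elim!: oddE simp: algebra_simps)
qed

definition mixed_sum :: "nat \<Rightarrow> nat \<Rightarrow> nat \<Rightarrow> real" where
  "mixed_sum w n j = (\<Sum>i=1..w-2. 1 / (real n ^ (w - i) * real j ^ i))"

lemma mixed_sum_off_diagonal:
  assumes "2 \<le> w" "0 < n" "0 < j" "n \<noteq> j"
  shows "mixed_sum w n j
    = 1 / (real j ^ (w - 2) * real n * (real n - real j)) - 1 / (real n ^ (w - 1) * (real n - real j))"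
proof -
  have w: "w = (w - 2) + 2" "w - 1 = (w - 2) + 1" using assms(1) by simp_all
  have "mixed_sum w n j = (\<Sum>i=1..w-2. 1 / (real n ^ ((w - 2) + 2 - i) * real j ^ i))"
    unfolding mixed_sum_def by (subst (1 2) w(1)) simp
  also have "\<dots> = 1 / (real j ^ (w - 2) * real n * (real n - real j)) - 1 / (real n ^ ((w - 2) + 1) * (real n - real j))"
    using assms by (intro sum_inverse_powers_eq) auto
  finally show ?thesis by (simp only: w(2))
qed

lemma mixed_sum_diagonal: "mixed_sum w j j = real (w - 2) / real j ^ w"
proof -
  have "mixed_sum w j j = (\<Sum>i=1..w-2. 1 / real j ^ w)"
    unfolding mixed_sum_def by (intro sum.cong refl) (auto simp: power_add[symmetric])
  then show ?thesis by simp
qed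

definition lower_col_sum :: "nat \<Rightarrow> nat \<Rightarrow> real" where
  "lower_col_sum w j = (if odd j then harm j / real j ^ (w - 1) else 0)"

definition upper_col_sum :: "nat \<Rightarrow> nat \<Rightarrow> real" where
  "upper_col_sum w j = (if odd j then harm (j - 1) / real j ^ (w - 1) else 0)"

definition row_sum :: "nat \<Rightarrow> nat \<Rightarrow> real" where
  "row_sum w n = (\<Sum>j | odd j \<and> j < n. 1 / (real n ^ (w - 1) * (real n - real j)))"

lemma lower_col_sum_minus_upper_col_sum:
  assumes "1 \<le> w" "odd j"
  shows "lower_col_sum w j - upper_col_sum w j = 1 / real j ^ w"
proof -
  obtain k where k: "j = Suc k" using \<open>odd j\<close> by (cases j) auto
  have "harm j = harm (j - 1) + 1 / real j"
    by (simp add: k harm_Suc inverse_eq_divide)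
  moreover have "real j ^ w = real j ^ (w - 1) * real j"
    using assms(1) by (simp flip: power_Suc2)
  ultimately show ?thesis
    using assms by (simp add: lower_col_sum_def upper_col_sum_def add_divide_distrib)
qed

context
  fixes w :: nat
  assumes w: "3 \<le> w"
begin

lemma lower_col_sum_summable: "lower_col_sum w summable_on UNIV"
proof (rule summable_on_comparison_test)
  show "(\<lambda>j. harm j / real j ^ (w - 1)) summable_on UNIV"
    using w by (intro summable_on_harm_div_power) simp
qed (auto simp: lower_col_sum_def harm_nonneg)

lemma upper_col_sum_summable: "upper_col_sum w summable_on UNIV"
  by (rule summable_on_comparison_test[OF lower_col_sum_summable])
     (auto simp: upper_col_sum_def lower_col_sum_def harm_nonneg intro!: divide_right_mono harm_mono)

lemma row_sum_summable: "row_sum w summable_on UNIV"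
proof (rule summable_on_comparison_test)
  show "(\<lambda>n. harm n / real n ^ (w - 1)) summable_on UNIV"
    using w by (intro summable_on_harm_div_power) simp
  fix n
  have "row_sum w n = (\<Sum>j | odd j \<and> j < n. 1 / (real n - real j)) / real n ^ (w - 1)"
    unfolding row_sum_def sum_divide_distrib by (intro sum.cong refl) auto
  also have "\<dots> \<le> harm n / real n ^ (w - 1)"
    by (intro divide_right_mono sum_odd_inverse_diff_le_harm) auto
  finally show "row_sum w n \<le> harm n / real n ^ (w - 1)" .
  show "0 \<le> row_sum w n"
    unfolding row_sum_def by (intro sum_nonneg) auto
qed

lemma has_sum_lower_cols:
  "((\<lambda>(n, j). 1 / (real j ^ (w - 2) * real n * (real n - real j))) has_sum infsum (lower_col_sum w) UNIV)
     {(n, j). odd j \<and> j < n}"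
proof (rule has_sum_by_cols[where g = "lower_col_sum w"])
  fix j :: nat
  show "((\<lambda>n. (\<lambda>(n, j). 1 / (real j ^ (w - 2) * real n * (real n - real j))) (n, j)) has_sum lower_col_sum w j)
      {n. (n, j) \<in> {(n, j). odd j \<and> j < n}}"
  proof (cases "odd j")
    case True
    then have "1 \<le> j" by (cases j) auto
    have "w - 1 = Suc (w - 2)" using w by simp
    then have "1 / real j ^ (w - 2) * (harm j / real j) = lower_col_sum w j"
      unfolding lower_col_sum_def using True by simp
    with has_sum_cmult_right[OF has_sum_inverse_mult_diff_tail[OF \<open>1 \<le> j\<close>], of "1 / real j ^ (w - 2)"]
    show ?thesis using True by (simp add: mult.assoc)
  qed (simp add: lower_col_sum_def)
qed (use lower_col_sum_summable in auto)

lemma has_sum_upper_cols: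
  "((\<lambda>(n, j). 1 / (real j ^ (w - 2) * real n * (real j - real n))) has_sum infsum (upper_col_sum w) UNIV)
     {(n, j). odd j \<and> n < j \<and> j < 2 * n}"
proof (rule has_sum_by_cols[where g = "upper_col_sum w"])
  fix j :: nat
  show "((\<lambda>n. (\<lambda>(n, j). 1 / (real j ^ (w - 2) * real n * (real j - real n))) (n, j)) has_sum upper_col_sum w j)
      {n. (n, j) \<in> {(n, j). odd j \<and> n < j \<and> j < 2 * n}}"
  proof (cases "odd j")
    case True
    have "finite {n. n < j \<and> j < 2 * n}" by (auto intro: finite_subset[of _ "{..<j}"])
    have "(\<Sum>n | n < j \<and> j < 2 * n. 1 / (real j ^ (w - 2) * real n * (real j - real n)))
        = 1 / real j ^ (w - 2) * (\<Sum>n | n < j \<and> j < 2 * n. 1 / (real n * (real j - real n)))"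
      unfolding sum_distrib_left by (intro sum.cong refl) auto
    also have "\<dots> = upper_col_sum w j"
    proof -
      have "w - 1 = Suc (w - 2)" using w by simp
      then show ?thesis
        unfolding upper_col_sum_def using True by (simp add: sum_inverse_mult_diff_middle)
    qed
    finally show ?thesis
      using True \<open>finite _\<close> by (intro has_sum_finiteI) (auto simp: conj_commute)
  qed (simp add: upper_col_sum_def)
qed (use upper_col_sum_summable in auto)

lemma has_sum_lower_rows:
  "((\<lambda>(n, j). 1 / (real n ^ (w - 1) * (real n - real j))) has_sum infsum (row_sum w) UNIV)
     {(n, j). odd j \<and> j < n}"
proof (rule has_sum_by_rows[where g = "row_sum w"])
  fix n :: nat
  have "finite {j. odd j \<and> j < n}" by (auto intro: finite_subset[of _ "{..<n}"])
  then show "((\<lambda>j. (\<lambda>(n, j). 1 / (real n ^ (w - 1) * (real n - real j))) (n, j)) has_sum row_sum w n)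
      {j. (n, j) \<in> {(n, j). odd j \<and> j < n}}"
    by (intro has_sum_finiteI) (auto simp: row_sum_def)
qed (use row_sum_summable in auto)

lemma has_sum_upper_rows:
  "((\<lambda>(n, j). 1 / (real n ^ (w - 1) * (real j - real n))) has_sum infsum (row_sum w) UNIV)
     {(n, j). odd j \<and> n < j \<and> j < 2 * n}"
proof (rule has_sum_by_rows[where g = "row_sum w"])
  fix n :: nat
  have "finite {j. odd j \<and> n < j \<and> j < 2 * n}" by (auto intro: finite_subset[of _ "{..<2 * n}"])
  have "row_sum w n = (\<Sum>j | odd j \<and> j < n. 1 / (real n - real j)) / real n ^ (w - 1)"
    unfolding row_sum_def sum_divide_distrib by (intro sum.cong refl) auto
  also have "\<dots> = (\<Sum>j | odd j \<and> n < j \<and> j < 2 * n. 1 / (real j - real n)) / real n ^ (w - 1)"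
    by (simp only: sum_odd_inverse_diff_reflect)
  also have "\<dots> = (\<Sum>j | odd j \<and> n < j \<and> j < 2 * n. 1 / (real n ^ (w - 1) * (real j - real n)))"
    unfolding sum_divide_distrib by (intro sum.cong refl) auto
  finally show "((\<lambda>j. (\<lambda>(n, j). 1 / (real n ^ (w - 1) * (real j - real n))) (n, j)) has_sum row_sum w n)
      {j. (n, j) \<in> {(n, j). odd j \<and> n < j \<and> j < 2 * n}}"
    using \<open>finite _\<close> by (intro has_sum_finiteI) auto
qed (use row_sum_summable in auto)

lemma has_sum_mixed_sum_lower:
  "((\<lambda>(n, j). mixed_sum w n j) has_sum infsum (lower_col_sum w) UNIV - infsum (row_sum w) UNIV)
     {(n, j). odd j \<and> j < n}"
  using has_sum_diff[OF has_sum_lower_cols has_sum_lower_rows]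
  by (rule has_sum_cong[THEN iffD1, rotated]) (use w in \<open>auto simp: mixed_sum_off_diagonal odd_pos\<close>)

lemma has_sum_mixed_sum_upper:
  "((\<lambda>(n, j). mixed_sum w n j) has_sum infsum (row_sum w) UNIV - infsum (upper_col_sum w) UNIV)
     {(n, j). odd j \<and> n < j \<and> j < 2 * n}"
proof -
  have flip: "n < j \<Longrightarrow> 1 / (a * (real n - real j)) = - (1 / (a * (real j - real n)))"
    for a :: real and n j :: nat
    by (metis minus_diff_eq minus_divide_right mult_minus_right)
  from has_sum_diff[OF has_sum_upper_rows has_sum_upper_cols] show ?thesis
    by (rule has_sum_cong[THEN iffD1, rotated]) (use w in \<open>auto simp: mixed_sum_off_diagonal odd_pos flip\<close>)
qed

lemma has_sum_mixed_sum_diagonal: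
  "((\<lambda>(n, j). mixed_sum w n j) has_sum real (w - 2) * lambda_odd w) {(n, j). odd j \<and> n = j}"
proof -
  have "((\<lambda>j. real (w - 2) * (1 / real j ^ w)) has_sum real (w - 2) * lambda_odd w) {j. odd j}"
    using w by (intro has_sum_cmult_right has_sum_lambda_odd) simp
  then show ?thesis
    by (rule has_sum_reindex_bij_witness[of _ fst "\<lambda>j. (j, j)", THEN iffD1, rotated -1])
       (auto simp: mixed_sum_diagonal)
qed

lemma infsum_lower_col_sum_minus_upper_col_sum:
  "infsum (lower_col_sum w) UNIV - infsum (upper_col_sum w) UNIV = lambda_odd w"
proof (rule has_sum_unique)
  show "((\<lambda>j. lower_col_sum w j - upper_col_sum w j) has_sum
      infsum (lower_col_sum w) UNIV - infsum (upper_col_sum w) UNIV) UNIV"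
    using lower_col_sum_summable upper_col_sum_summable by (intro has_sum_diff) simp_all
  have "((\<lambda>j. 1 / real j ^ w) has_sum lambda_odd w) {j. odd j}"
    using w by (intro has_sum_lambda_odd) simp
  then show "((\<lambda>j. lower_col_sum w j - upper_col_sum w j) has_sum lambda_odd w) UNIV"
  proof (subst has_sum_cong_neutral[where T = "{j. odd j}"])
    show "lower_col_sum w j - upper_col_sum w j = 1 / real j ^ w" if "j \<in> UNIV \<inter> {j. odd j}" for j
      using w that by (intro lower_col_sum_minus_upper_col_sum) auto
  qed (auto simp: lower_col_sum_def upper_col_sum_def)
qed

lemma has_sum_mixed_sum:
  "((\<lambda>(n, j). mixed_sum w n j) has_sum real (w - 1) * lambda_odd w) {(n, j). odd j \<and> j < 2 * n}"
proof -
  have "((\<lambda>(n, j). mixed_sum w n j) has_sum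
      (infsum (lower_col_sum w) UNIV - infsum (row_sum w) UNIV)
      + (infsum (row_sum w) UNIV - infsum (upper_col_sum w) UNIV)
      + real (w - 2) * lambda_odd w)
      ({(n :: nat, j :: nat). odd j \<and> j < n} \<union> {(n, j). odd j \<and> n < j \<and> j < 2 * n} \<union> {(n, j). odd j \<and> n = j})"
    by (intro has_sum_Un_disjoint has_sum_mixed_sum_lower has_sum_mixed_sum_upper has_sum_mixed_sum_diagonal) auto
  moreover have "{(n :: nat, j :: nat). odd j \<and> j < n} \<union> {(n, j). odd j \<and> n < j \<and> j < 2 * n} \<union> {(n, j). odd j \<and> n = j}
      = {(n, j). odd j \<and> j < 2 * n}"
    by (auto elim!: oddE)
  ultimately show ?thesis
    using infsum_lower_col_sum_minus_upper_col_sum w by (simp add: of_nat_diff algebra_simps)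
qed

lemma summable_on_inverse_power_pairs:
  assumes "i \<in> {1..w-2}"
  shows "(\<lambda>(n, j). 1 / (real n ^ (w - i) * real j ^ i)) summable_on {(n, j). odd j \<and> j < 2 * n}"
proof (rule summable_on_comparison_test)
  show "(\<lambda>(n, j). mixed_sum w n j) summable_on {(n, j). odd j \<and> j < 2 * n}"
    using has_sum_mixed_sum by (auto simp: summable_on_def)
  show "(\<lambda>(n, j). 1 / (real n ^ (w - i) * real j ^ i)) p \<le> (\<lambda>(n, j). mixed_sum w n j) p" for p
    unfolding mixed_sum_def using assms by (cases p) (auto intro: member_le_sum)
qed auto

end

lemma sigma_sum_eq_infsum:
  assumes "(\<lambda>(n, j). 1 / (real n ^ s * real j ^ t)) summable_on {(n, j). odd j \<and> j < 2 * n}"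
  shows "sigma_sum s t = infsum (\<lambda>(n, j). 1 / (real n ^ s * real j ^ t)) {(n, j). odd j \<and> j < 2 * n}"
    (is "_ = infsum ?f ?R")
proof -
  have "((\<lambda>n. S_odd t n / real n ^ s) has_sum infsum ?f ?R) UNIV"
  proof (rule has_sum_rowsD[OF has_sum_infsum[OF assms]])
    fix n :: nat
    have "finite {j. odd j \<and> j < 2 * n}" by (auto intro: finite_subset[of _ "{..<2 * n}"])
    moreover have "S_odd t n / real n ^ s = (\<Sum>j | odd j \<and> j < 2 * n. ?f (n, j))"
      unfolding S_odd_eq_sum_odd sum_divide_distrib by (intro sum.cong refl) (simp add: mult.commute)
    ultimately show "((\<lambda>j. ?f (n, j)) has_sum S_odd t n / real n ^ s) {j. (n, j) \<in> ?R}"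
      by (intro has_sum_finiteI) auto
  qed
  then have "(\<lambda>n. S_odd t n / real n ^ s) sums infsum ?f ?R"
    by (rule has_sum_imp_sums)
  then have "(\<lambda>n. S_odd t (Suc n) / real (Suc n) ^ s) sums infsum ?f ?R"
    by (subst sums_Suc_iff) (simp add: S_odd_def)
  then show ?thesis
    unfolding sigma_sum_def by (rule sums_unique[symmetric])
qed

theorem mainTheorem1:
  fixes w :: nat
  assumes "w \<ge> 3"
  shows "(\<Sum>i=1..w-2. sigma_sum (w - i) i) = real (w - 1) * lambda_odd w"
proof -
  let ?R = "{(n, j). odd j \<and> j < 2 * n}"
  let ?f = "\<lambda>i (n, j). 1 / (real n ^ (w - i) * real j ^ i)"
  have "(\<Sum>i=1..w-2. sigma_sum (w - i) i) = (\<Sum>i=1..w-2. infsum (?f i) ?R)"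
    using assms by (intro sum.cong refl sigma_sum_eq_infsum summable_on_inverse_power_pairs)
  also have "\<dots> = infsum (\<lambda>p. \<Sum>i=1..w-2. ?f i p) ?R"
    using assms by (intro infsumI[symmetric] has_sum_sum has_sum_infsum summable_on_inverse_power_pairs) auto
  also have "(\<lambda>p. \<Sum>i=1..w-2. ?f i p) = (\<lambda>(n, j). mixed_sum w n j)"
    by (auto simp: mixed_sum_def fun_eq_iff)
  also have "infsum \<dots> ?R = real (w - 1) * lambda_odd w"
    using assms by (intro infsumI has_sum_mixed_sum)
  finally show ?thesis .
qed

end
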